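(* Every simple probabilistic automaton is leaktight.
   Context: Fix a finite alphabet $A$. A probabilistic automaton is $\mathcal{A}=(Q,q_0,\Delta,F)$ with $Q$ finite, $\Delta:Q\times A\to\mathcal{D}(Q)$. For $a\in A$ let $M_a(s,t)=\Delta(s,a)(t)$, for $u=a_0\cdots a_{n-1}$ let $M_u=M_{a_0}\cdots M_{a_{n-1}}$ (identity for the empty word), and $\mathbb{P}_{\mathcal{A}}(s\xrightarrow{u}t)=M_u(s,t)$, $\mathbb{P}_{\mathcal{A}}(s\xrightarrow{u}T)=\sum_{t\in T}\mathbb{P}_{\mathcal{A}}(s\xrightarrow{u}t)$. For an infinite word $w\in A^\omega$, $w_{<k}$ denotes its prefix of length $k$. For $w\in A^\omega$ and $p\in Q$, the process induced by $w$ from $p$ is simple if there exist $\lambda>0$ and sequences $(A_k)_{k\in\mathbb{N}},(B_k)_{k\in\mathbb{N}}$ of subsets of $Q$ such that: for all $k$, $A_k\cap B_k=\emptyset$ and $A_k\cup B_k=Q$; for all $k$ and all $q\in A_k$, $\mathbb{P}_{\mathcal{A}}(p\xrightarrow{w_{<k}}q)\ge\lambda$; and $\lim_{n\to\infty}\mathbb{P}_{\mathcal{A}}(p\xrightarrow{w_{<n}}B_n)=0$. $\mathcal{A}$ is simple if for every $w\in A^\omega$ and every $p\in Q$ the process induced by $w$ from $p$ is simple. A nonnegative $Q\times Q$ matrix $M$ is idempotent if $M(s,t)>0\iff M^2(s,t)>0$ for all $s,t$; a finite word $u$ is idempotent if $M_u$ is. A leak is a sequence $(u_n)$ of idempotent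 words such that $M_{u_n}$ converges to an idempotent matrix $M$ and there exist states $r,q$, both recurrent in the Markov chain with transition matrix $M$, with $\lim_n\mathbb{P}_{\mathcal{A}}(r\xrightarrow{u_n}q)=0$ and $\mathbb{P}_{\mathcal{A}}(r\xrightarrow{u_n}q)>0$ for all $n$. $\mathcal{A}$ is leaktight if it has no leak. *)

theory Defs
  imports "HOL-Probability.Probability"
begin

text \<open>The initial state
  and accepting states play no role in the notions of simplicity and leaktightness.\<close>

type_synonym 'q mat = "'q \<Rightarrow> 'q \<Rightarrow> real"

definition mat_mult :: "'q::finite mat \<Rightarrow> 'q mat \<Rightarrow> 'q mat" where
  "mat_mult M N = (\<lambda>s t. \<Sum>r\<in>UNIV. M s r * N r t)"

definition mat_id :: "'q mat" where
  "mat_id = (\<lambda>s t. if s = t then 1 else 0)"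

definition letter_mat :: "('q \<Rightarrow> 'a \<Rightarrow> 'q pmf) \<Rightarrow> 'a \<Rightarrow> 'q mat" where
  "letter_mat Delta a = (\<lambda>s t. pmf (Delta s a) t)"

fun word_mat :: "('q::finite \<Rightarrow> 'a \<Rightarrow> 'q pmf) \<Rightarrow> 'a list \<Rightarrow> 'q mat" where
  "word_mat Delta [] = mat_id"
| "word_mat Delta (a # u) = mat_mult (letter_mat Delta a) (word_mat Delta u)"

definition prefix_word :: "(nat \<Rightarrow> 'a) \<Rightarrow> nat \<Rightarrow> 'a list" where
  "prefix_word w k = map w [0..<k]"

definition simple_process :: "('q::finite \<Rightarrow> 'a \<Rightarrow> 'q pmf) \<Rightarrow> (nat \<Rightarrow> 'a) \<Rightarrow> 'q \<Rightarrow> bool" where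
  "simple_process Delta w p \<longleftrightarrow>
     (\<exists>lam::real. lam > 0 \<and> (\<exists>A B :: nat \<Rightarrow> 'q set.
        (\<forall>k. A k \<inter> B k = {} \<and> A k \<union> B k = UNIV) \<and>
        (\<forall>k. \<forall>q\<in>A k. word_mat Delta (prefix_word w k) p q \<ge> lam) \<and>
        (\<lambda>n. \<Sum>t\<in>B n. word_mat Delta (prefix_word w n) p t) \<longlonglongrightarrow> 0))"

definition simple_pa :: "('q::finite \<Rightarrow> 'a \<Rightarrow> 'q pmf) \<Rightarrow> bool" where
  "simple_pa Delta \<longleftrightarrow> (\<forall>w p. simple_process Delta w p)"

definition idempotent_mat :: "'q::finite mat \<Rightarrow> bool" where
  "idempotent_mat M \<longleftrightarrow> (\<forall>s t. M s t > 0 \<longleftrightarrow> mat_mult M M s t > 0)"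

definition mc_reach :: "'q mat \<Rightarrow> ('q \<times> 'q) set" where
  "mc_reach M = {(s, t). M s t > 0}\<^sup>*"

definition recurrent :: "'q mat \<Rightarrow> 'q \<Rightarrow> bool" where
  "recurrent M s \<longleftrightarrow> (\<forall>t. (s, t) \<in> mc_reach M \<longrightarrow> (t, s) \<in> mc_reach M)"

definition is_leak :: "('q::finite \<Rightarrow> 'a \<Rightarrow> 'q pmf) \<Rightarrow> (nat \<Rightarrow> 'a list) \<Rightarrow> bool" where
  "is_leak Delta u \<longleftrightarrow>
     (\<forall>n. idempotent_mat (word_mat Delta (u n))) \<and>
     (\<exists>M. (\<forall>s t. (\<lambda>n. word_mat Delta (u n) s t) \<longlonglongrightarrow> M s t) \<and>
          idempotent_mat M \<and>
          (\<exists>r q. recurrent M r \<and> recurrent M q \<and>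
             (\<lambda>n. word_mat Delta (u n) r q) \<longlonglongrightarrow> 0 \<and>
             (\<forall>n. word_mat Delta (u n) r q > 0)))"

definition leaktight :: "('q::finite \<Rightarrow> 'a \<Rightarrow> 'q pmf) \<Rightarrow> bool" where
  "leaktight Delta \<longleftrightarrow> \<not> (\<exists>u. is_leak Delta u)"

end

theory Submission
  imports Defs
begin

text \<open>Let \<open>u\<^sub>n\<close> be a leak with idempotent limit \<open>M\<close> and let \<open>C\<close> be the recurrence class of
  \<open>M\<close> containing \<open>r\<close>. Idempotency makes \<open>C\<close> closed under \<open>M\<close>, so the mass that \<open>u\<^sub>n\<close> lets
  escape from \<open>C\<close> tends to \<open>0\<close>, while from every state of \<open>C\<close> the words \<open>u\<^sub>n\<close> return to
  \<open>r\<close> with probability at least some \<open>\<mu> > 0\<close>, and \<open>r\<close> reaches \<open>q \<notin> C\<close> with positive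
  probability. Concatenating blocks \<open>u\<^sub>n\<close> with summable escape mass gives an infinite word
  along which the mass in \<open>C\<close> stays above \<open>1/2\<close>, so the mass flowing back into \<open>C\<close> from
  outside tends to \<open>0\<close> and each block starts with mass at least \<open>\<mu>/2\<close> on \<open>r\<close>. Inside a
  block this mass is carried from \<open>r\<close> to \<open>q\<close>, where almost nothing arrives, along a path
  losing at most the factor of the smallest positive transition probability per letter. Some
  prefix therefore puts on some state a mass bounded away from \<open>0\<close> but below the threshold
  \<open>\<lambda>\<close> of a simplicity witness \<open>(A\<^sub>k, B\<^sub>k)\<close>; that state lies in \<open>B\<^sub>k\<close>, whose mass vanishes.\<close>

section \<open>Stochastic and idempotent matrices\<close>

lemma mat_mult_assoc:
  "mat_mult (mat_mult A B) C = mat_mult A (mat_mult B C)" for A B C :: "'q::finite mat"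
  unfolding mat_mult_def
  apply (rule ext, rule ext)
  apply (simp add: sum_distrib_left sum_distrib_right mult.assoc)
  by (rule sum.swap)

lemma mat_mult_id_left [simp]: "mat_mult mat_id A = A" for A :: "'q::finite mat"
  by (simp add: mat_mult_def mat_id_def if_distrib[of "\<lambda>x. x * _"] cong: if_cong)

lemma mat_mult_id_right [simp]: "mat_mult A mat_id = A" for A :: "'q::finite mat"
  by (simp add: mat_mult_def mat_id_def if_distrib[of "\<lambda>x. _ * x"] cong: if_cong)

definition stochastic_mat :: "'q::finite mat \<Rightarrow> bool" where
  "stochastic_mat M \<longleftrightarrow> (\<forall>s t. 0 \<le> M s t) \<and> (\<forall>s. (\<Sum>t\<in>UNIV. M s t) = 1)"

lemma stochastic_mat_id: "stochastic_mat (mat_id :: 'q::finite mat)"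
  by (simp add: stochastic_mat_def mat_id_def)

lemma stochastic_mat_mult:
  assumes "stochastic_mat A" and "stochastic_mat B"
  shows "stochastic_mat (mat_mult A B)"
  unfolding stochastic_mat_def
proof (intro conjI allI)
  fix s t
  show "0 \<le> mat_mult A B s t"
    using assms unfolding stochastic_mat_def mat_mult_def by (simp add: sum_nonneg)
next
  fix s
  have "(\<Sum>t\<in>UNIV. mat_mult A B s t) = (\<Sum>x\<in>UNIV. A s x * (\<Sum>t\<in>UNIV. B x t))"
    unfolding mat_mult_def sum_distrib_left by (rule sum.swap)
  also have "\<dots> = 1"
    using assms by (simp add: stochastic_mat_def)
  finally show "(\<Sum>t\<in>UNIV. mat_mult A B s t) = 1" .
qed

lemma stochastic_mat_le_1:
  assumes "stochastic_mat M"
  shows "M s t \<le> 1"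
proof -
  have "M s t \<le> (\<Sum>t\<in>UNIV. M s t)"
    using assms by (intro member_le_sum) (auto simp: stochastic_mat_def)
  then show ?thesis
    using assms by (simp add: stochastic_mat_def)
qed

lemma stochastic_mat_limit:
  assumes "\<And>n. stochastic_mat (A n)" and "\<And>s t. (\<lambda>n. A n s t) \<longlonglongrightarrow> M s t"
  shows "stochastic_mat M"
  unfolding stochastic_mat_def
proof (intro conjI allI)
  fix s t
  show "0 \<le> M s t"
    using assms(1) by (intro LIMSEQ_le_const[OF assms(2)]) (auto simp: stochastic_mat_def)
next
  fix s
  have "(\<lambda>n. \<Sum>t\<in>UNIV. A n s t) \<longlonglongrightarrow> (\<Sum>t\<in>UNIV. M s t)"
    by (intro tendsto_sum assms(2))
  moreover have "(\<lambda>n. \<Sum>t\<in>UNIV. A n s t) = (\<lambda>n. 1)"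
    using assms(1) by (simp add: stochastic_mat_def)
  ultimately have "(\<lambda>n. 1) \<longlonglongrightarrow> (\<Sum>t\<in>UNIV. M s t)"
    by simp
  then show "(\<Sum>t\<in>UNIV. M s t) = 1"
    using LIMSEQ_unique[OF tendsto_const] by metis
qed

lemma idempotent_mat_trans:
  assumes "idempotent_mat M" and "\<And>s t. 0 \<le> M s t" and "0 < M s x" and "0 < M x t"
  shows "0 < M s t"
proof -
  have "M s x * M x t \<le> mat_mult M M s t"
    unfolding mat_mult_def by (rule member_le_sum[where f = "\<lambda>y. M s y * M y t"]) (auto simp: assms(2))
  then have "0 < mat_mult M M s t"
    using assms(3,4) by (meson mult_pos_pos order_less_le_trans)
  then show ?thesis
    using assms(1) unfolding idempotent_mat_def by blast
qed

lemma mc_reach_idempotent: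
  assumes "idempotent_mat M" and "\<And>s t. 0 \<le> M s t" and "(s, t) \<in> mc_reach M"
  shows "s = t \<or> 0 < M s t"
  using assms(3) unfolding mc_reach_def
  by (induction rule: rtrancl_induct) (auto intro: idempotent_mat_trans[OF assms(1,2)])

lemma recurrent_idempotent_return:
  assumes "stochastic_mat M" and "idempotent_mat M" and "recurrent M r" and "0 < M r c"
  shows "c = r \<or> 0 < M c r"
proof -
  have "(r, c) \<in> mc_reach M"
    using assms(4) by (auto simp: mc_reach_def)
  then have "(c, r) \<in> mc_reach M"
    using assms(3) by (simp add: recurrent_def)
  then show ?thesis
    using assms(1,2) by (auto simp: stochastic_mat_def dest: mc_reach_idempotent)
qed

lemma recurrent_idempotent_diag:
  assumes "stochastic_mat M" and "idempotent_mat M" and "recurrent M r"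
  shows "0 < M r r"
proof -
  have nonneg: "\<And>s t. 0 \<le> M s t" and row: "(\<Sum>t\<in>UNIV. M r t) = 1"
    using assms(1) by (auto simp: stochastic_mat_def)
  have "\<exists>t. 0 < M r t"
  proof (rule ccontr)
    assume "\<nexists>t. 0 < M r t"
    then have "(\<Sum>t\<in>UNIV. M r t) \<le> 0"
      by (intro sum_nonpos) (simp add: not_less)
    then show False
      using row by simp
  qed
  then obtain t where t: "0 < M r t" ..
  show ?thesis
    using recurrent_idempotent_return[OF assms t] idempotent_mat_trans[OF assms(2) nonneg t] t
    by blast
qed


lemma slow_decrease_crossing:
  fixes f :: "nat \<Rightarrow> real"
  assumes "\<epsilon> \<le> f 0" and "f n < \<epsilon>" and "0 \<le> c" and "\<And>i. i < n \<Longrightarrow> c * f i \<le> f (Suc i)"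
  shows "\<exists>i\<le>n. c * \<epsilon> \<le> f i \<and> f i < \<epsilon>"
  using assms(2,4)
proof (induction n)
  case 0
  then show ?case
    using assms(1) by simp
next
  case (Suc n)
  show ?case
  proof (cases "f n < \<epsilon>")
    case True
    then show ?thesis
      using Suc by (metis le_SucI less_SucI)
  next
    case False
    then have "c * \<epsilon> \<le> c * f n"
      using assms(3) by (simp add: mult_left_mono)
    also have "\<dots> \<le> f (Suc n)"
      using Suc.prems(2) by simp
    finally show ?thesis
      using Suc.prems(1) by blast
  qed
qed

lemma tendsto_zero_if_bounded_by_increments:
  fixes a Z :: "nat \<Rightarrow> real"
  assumes "\<And>j. 0 \<le> a j" and "\<And>j. a j \<le> Z (Suc j) - Z j" and "bdd_above (range Z)"
  shows "a \<longlonglongrightarrow> 0"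
proof -
  have "incseq Z"
    using assms(1,2) by (intro incseq_SucI) (meson diff_ge_0_iff_ge order_trans)
  then have Z: "Z \<longlonglongrightarrow> (SUP j. Z j)"
    by (rule LIMSEQ_incseq_SUP[OF assms(3)])
  then have "(\<lambda>j. Z (Suc j) - Z j) \<longlonglongrightarrow> 0"
    using tendsto_diff[OF LIMSEQ_Suc[OF Z] Z] by simp
  then show ?thesis
    by (rule tendsto_sandwich[of "\<lambda>_. 0", rotated 3]) (simp_all add: assms(1,2))
qed

lemma sum_half_powers: "(\<Sum>i<j. (1/2::real) ^ (i + 2)) = 1/2 - (1/2) ^ (j + 1)"
  by (induction j) (auto simp: field_simps)

section \<open>Words and mass flow\<close>

lemma min_pos_transition:
  fixes Delta :: "'q::finite \<Rightarrow> 'a::finite \<Rightarrow> 'q pmf"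
  obtains pm where "0 < pm" and "pm \<le> 1"
    and "\<And>s a t. 0 < pmf (Delta s a) t \<Longrightarrow> pm \<le> pmf (Delta s a) t"
proof -
  define P where "P = insert 1 ({0<..} \<inter> range (\<lambda>(s, a, t). pmf (Delta s a) t))"
  have "finite P" and "P \<noteq> {}"
    by (simp_all add: P_def)
  then have "Min P \<in> P" and Min_le_P: "\<And>p. p \<in> P \<Longrightarrow> Min P \<le> p"
    by simp_all
  show thesis
  proof (rule that)
    show "0 < Min P"
      using \<open>Min P \<in> P\<close> by (auto simp: P_def)
    show "Min P \<le> 1"
      by (rule Min_le_P) (simp add: P_def)
    show "Min P \<le> pmf (Delta s a) t" if "0 < pmf (Delta s a) t" for s a t
      using that by (intro Min_le_P) (auto simp: P_def image_iff)
  qed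
qed

definition flow :: "('q::finite \<Rightarrow> 'a \<Rightarrow> 'q pmf) \<Rightarrow> ('q \<Rightarrow> real) \<Rightarrow> 'q set \<Rightarrow> 'a list \<Rightarrow> 'q set \<Rightarrow> real"
  where "flow Delta x S u D = (\<Sum>s\<in>S. x s * (\<Sum>d\<in>D. word_mat Delta u s d))"

context
  fixes Delta :: "'q::finite \<Rightarrow> 'a \<Rightarrow> 'q pmf"
begin

lemma word_mat_append: "word_mat Delta (u @ v) = mat_mult (word_mat Delta u) (word_mat Delta v)"
  by (induction u) (simp_all add: mat_mult_assoc)

lemma word_mat_Cons_apply:
  "word_mat Delta (a # u) s t = (\<Sum>x\<in>UNIV. pmf (Delta s a) x * word_mat Delta u x t)"
  by (simp add: mat_mult_def letter_mat_def)

lemma stochastic_word_mat: "stochastic_mat (word_mat Delta u)"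
proof (induction u)
  case Nil
  show ?case by (simp add: stochastic_mat_id)
next
  case (Cons a u)
  have "stochastic_mat (letter_mat Delta a)"
    by (simp add: stochastic_mat_def letter_mat_def sum_pmf_eq_1)
  then show ?case
    using Cons.IH by (simp add: stochastic_mat_mult)
qed

lemma word_mat_nonneg: "0 \<le> word_mat Delta u s t"
  using stochastic_word_mat by (simp add: stochastic_mat_def)

lemma word_mat_le_1: "word_mat Delta u s t \<le> 1"
  using stochastic_word_mat by (rule stochastic_mat_le_1)

lemma word_mat_row_sum: "(\<Sum>t\<in>UNIV. word_mat Delta u s t) = 1"
  using stochastic_word_mat by (simp add: stochastic_mat_def)

lemma word_mat_sum_Compl:
  "(\<Sum>d\<in>-D. word_mat Delta u s d) = 1 - (\<Sum>d\<in>D. word_mat Delta u s d)"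
proof -
  note word_mat_row_sum
  moreover have "(\<Sum>d\<in>UNIV. word_mat Delta u s d)
      = (\<Sum>d\<in>D. word_mat Delta u s d) + (\<Sum>d\<in>-D. word_mat Delta u s d)"
    using sum.Int_Diff[of UNIV _ D] by (simp add: Compl_eq_Diff_UNIV)
  ultimately show ?thesis
    by simp
qed

lemma word_mat_pos_path:
  assumes "0 < word_mat Delta v r q"
  obtains p where "p 0 = r" and "p (length v) = q"
    and "\<And>i. i < length v \<Longrightarrow> 0 < pmf (Delta (p i) (v ! i)) (p (Suc i))"
  using assms
proof (induction v arbitrary: r thesis)
  case Nil
  then have "r = q"
    by (simp add: mat_id_def split: if_splits)
  then show ?case
    using Nil(1)[of "\<lambda>_. r"] by simp
next
  case (Cons a v)
  have "0 < (\<Sum>x\<in>UNIV. pmf (Delta r a) x * word_mat Delta v x q)"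
    using Cons.prems(2) unfolding word_mat_Cons_apply .
  then obtain x where "0 < pmf (Delta r a) x * word_mat Delta v x q"
    by (metis (no_types, lifting) not_less sum_nonpos)
  then have x: "0 < pmf (Delta r a) x" and "0 < word_mat Delta v x q"
    using word_mat_nonneg by (simp_all add: zero_less_mult_iff)
  then obtain p where "p 0 = x" "p (length v) = q"
    and "\<And>i. i < length v \<Longrightarrow> 0 < pmf (Delta (p i) (v ! i)) (p (Suc i))"
    using Cons.IH by blast
  then show ?case
    using x by (intro Cons.prems(1)[of "case_nat r p"]) (auto simp: nth_Cons split: nat.splits)
qed

lemma flow_singleton: "flow Delta x S u {t} = (\<Sum>s\<in>S. x s * word_mat Delta u s t)"
  by (simp add: flow_def)

lemma flow_Nil_singleton: "flow Delta x S [] {t} = (if t \<in> S then x t else 0)"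
  by (simp add: flow_def mat_id_def if_distrib[of "\<lambda>y. _ * y"] cong: if_cong)

lemma flow_nonneg: "(\<And>s. 0 \<le> x s) \<Longrightarrow> 0 \<le> flow Delta x S u D"
  unfolding flow_def by (intro sum_nonneg mult_nonneg_nonneg) (simp_all add: word_mat_nonneg)

lemma flow_mono_target: "(\<And>s. 0 \<le> x s) \<Longrightarrow> D \<subseteq> D' \<Longrightarrow> flow Delta x S u D \<le> flow Delta x S u D'"
  unfolding flow_def by (intro sum_mono mult_left_mono sum_mono2) (simp_all add: word_mat_nonneg)

lemma flow_le_unit_weight:
  "(\<And>s. 0 \<le> x s) \<Longrightarrow> (\<And>s. x s \<le> 1) \<Longrightarrow> flow Delta x S u D \<le> flow Delta (\<lambda>_. 1) S u D"
  unfolding flow_def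
  by (intro sum_mono mult_right_mono) (simp_all add: sum_nonneg word_mat_nonneg)

lemma flow_source_split: "flow Delta x UNIV u D = flow Delta x C u D + flow Delta x (-C) u D"
  unfolding flow_def using sum.Int_Diff[of UNIV _ C] by (simp add: Compl_eq_Diff_UNIV)

lemma flow_target_Compl: "flow Delta x S u (-D) = (\<Sum>s\<in>S. x s) - flow Delta x S u D"
  by (simp add: flow_def word_mat_sum_Compl right_diff_distrib sum_subtractf)

lemma sum_flow_singleton: "(\<Sum>t\<in>D. flow Delta x S u {t}) = flow Delta x S u D"
  unfolding flow_def by (simp add: sum_distrib_left sum.swap[of _ D])

lemma flow_append:
  "flow Delta x S (u @ v) D = (\<Sum>t\<in>UNIV. flow Delta x S u {t} * (\<Sum>d\<in>D. word_mat Delta v t d))"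
proof -
  have "flow Delta x S (u @ v) D
      = (\<Sum>s\<in>S. \<Sum>t\<in>UNIV. x s * word_mat Delta u s t * (\<Sum>d\<in>D. word_mat Delta v t d))"
    unfolding flow_def word_mat_append mat_mult_def
    by (simp add: sum_distrib_left sum_distrib_right mult.assoc sum.swap[of _ D])
  also have "\<dots> = (\<Sum>t\<in>UNIV. flow Delta x S u {t} * (\<Sum>d\<in>D. word_mat Delta v t d))"
    by (subst sum.swap) (simp add: flow_singleton sum_distrib_right)
  finally show ?thesis .
qed

lemma flow_append_ge:
  assumes "\<And>s. 0 \<le> x s"
  shows "flow Delta x S u {t} * (\<Sum>d\<in>D. word_mat Delta v t d) \<le> flow Delta x S (u @ v) D"
  unfolding flow_append
  by (rule member_le_sum[where f = "\<lambda>t. flow Delta x S u {t} * (\<Sum>d\<in>D. word_mat Delta v t d)"])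
    (simp_all add: assms flow_nonneg sum_nonneg word_mat_nonneg)

lemma flow_take_drop_ge:
  assumes "\<And>s. 0 \<le> x s"
  shows "flow Delta x S (take i v) {t} * (\<Sum>d\<in>D. word_mat Delta (drop i v) t d) \<le> flow Delta x S v D"
  using flow_append_ge[of x S "take i v" t "drop i v" D, OF assms] by simp

lemma flow_threshold_crossing:
  assumes pm: "0 \<le> pm" "\<And>s a t. 0 < pmf (Delta s a) t \<Longrightarrow> pm \<le> pmf (Delta s a) t"
    and x: "\<And>s. 0 \<le> x s" and "r \<in> S" and "\<epsilon> \<le> x r"
    and "0 < word_mat Delta v r q" and "flow Delta x S v {q} < \<epsilon>"
  shows "\<exists>i\<le>length v. \<exists>t. pm * \<epsilon> \<le> flow Delta x S (take i v) {t} \<and> flow Delta x S (take i v) {t} < \<epsilon>"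
proof -
  obtain p where p: "p 0 = r" "p (length v) = q"
    and path: "\<And>i. i < length v \<Longrightarrow> 0 < pmf (Delta (p i) (v ! i)) (p (Suc i))"
    using word_mat_pos_path[OF assms(6)] by blast
  define f where "f i = flow Delta x S (take i v) {p i}" for i
  have "pm * f i \<le> f (Suc i)" if "i < length v" for i
  proof -
    have "0 \<le> f i"
      unfolding f_def by (rule flow_nonneg[OF x])
    then have "pm * f i \<le> f i * pmf (Delta (p i) (v ! i)) (p (Suc i))"
      using mult_right_mono[OF pm(2)[OF path[OF that]]] by (metis mult.commute)
    also have "\<dots> \<le> flow Delta x S (take i v @ [v ! i]) {p (Suc i)}"
      using flow_append_ge[of x S "take i v" "p i" "[v ! i]" "{p (Suc i)}", OF x] by (simp add: f_def letter_mat_def)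
    finally show ?thesis
      using that by (simp add: f_def take_Suc_conv_app_nth)
  qed
  moreover have "\<epsilon> \<le> f 0" and "f (length v) < \<epsilon>"
    using assms(4,5,7) p by (simp_all add: f_def flow_Nil_singleton)
  ultimately obtain i where "i \<le> length v" "pm * \<epsilon> \<le> f i" "f i < \<epsilon>"
    using slow_decrease_crossing[of \<epsilon> f "length v" pm] pm(1) by blast
  then show ?thesis
    unfolding f_def by blast
qed

lemma flow_crossing_with_inflow:
  assumes pm: "0 < pm" "pm \<le> 1" "\<And>s a t. 0 < pmf (Delta s a) t \<Longrightarrow> pm \<le> pmf (Delta s a) t"
    and x: "\<And>s. 0 \<le> x s" "\<And>s. x s \<le> 1"
    and C: "r \<in> C" "q \<notin> C" and pos: "0 < word_mat Delta v r q" and \<epsilon>: "0 < \<epsilon>" "\<epsilon> \<le> x r"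
    and escape: "flow Delta (\<lambda>_. 1) C v (-C) \<le> pm * \<epsilon> / 2"
  shows "\<exists>i\<le>length v. \<exists>t. pm * \<epsilon> \<le> flow Delta x UNIV (take i v) {t} \<and>
           flow Delta x UNIV (take i v) {t} < \<epsilon> + 2 * flow Delta x (-C) v C"
proof -
  have escape_x: "flow Delta x C v (-C) \<le> pm * \<epsilon> / 2"
    using flow_le_unit_weight[OF x] escape by (rule order_trans)
  have "flow Delta x C v {q} \<le> flow Delta x C v (-C)"
    using C(2) by (intro flow_mono_target x) simp
  also have "\<dots> < \<epsilon>"
    using escape_x mult_left_le_one_le[of \<epsilon> pm] pm \<epsilon>(1) by linarith
  finally obtain i t where i: "i \<le> length v"
    and lower: "pm * \<epsilon> \<le> flow Delta x C (take i v) {t}" and upper: "flow Delta x C (take i v) {t} < \<epsilon>"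
    using flow_threshold_crossing[where x = x, OF less_imp_le[OF pm(1)] pm(3) x(1) C(1) \<epsilon>(2) pos] by blast
  let ?\<gamma> = "flow Delta x C (take i v) {t}" and ?\<delta> = "flow Delta x (-C) (take i v) {t}"
  define g where "g = (\<Sum>d\<in>-C. word_mat Delta (drop i v) t d)"
  \<comment> \<open>\<open>t\<close> carries at least \<open>pm \<cdot> \<epsilon>\<close> of the mass started in \<open>C\<close>, of which at most \<open>pm \<cdot> \<epsilon> / 2\<close>
    leaves \<open>C\<close>; so from \<open>t\<close> the rest of \<open>v\<close> stays in \<open>C\<close> with probability at least \<open>1/2\<close>, and the
    mass on \<open>t\<close> started outside \<open>C\<close> is at most twice the inflow into \<open>C\<close>.\<close>
  have "?\<gamma> * g \<le> ?\<gamma> * (1 / 2)"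
    using flow_take_drop_ge[of x C i v t "-C", OF x(1)] escape_x lower by (simp add: g_def)
  moreover have "0 < ?\<gamma>"
    using lower pm(1) \<epsilon>(1) by (meson mult_pos_pos order_less_le_trans)
  ultimately have "g \<le> 1 / 2"
    by (rule mult_left_le_imp_le)
  then have "?\<delta> * (1 / 2) \<le> ?\<delta> * (\<Sum>d\<in>C. word_mat Delta (drop i v) t d)"
    using flow_nonneg[OF x(1)] by (intro mult_left_mono) (simp_all add: g_def word_mat_sum_Compl)
  also have "\<dots> \<le> flow Delta x (-C) v C"
    by (rule flow_take_drop_ge[of x, OF x(1)])
  finally have "?\<delta> \<le> 2 * flow Delta x (-C) v C"
    by simp
  moreover have "0 \<le> ?\<delta>"
    by (rule flow_nonneg[OF x(1)])
  moreover have "flow Delta x UNIV (take i v) {t} = ?\<gamma> + ?\<delta>"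
    by (rule flow_source_split)
  ultimately have "pm * \<epsilon> \<le> flow Delta x UNIV (take i v) {t}"
    and "flow Delta x UNIV (take i v) {t} < \<epsilon> + 2 * flow Delta x (-C) v C"
    using lower upper by linarith+
  then show ?thesis
    using i by blast
qed

end

section \<open>Concatenation of blocks\<close>

definition block_concat :: "(nat \<Rightarrow> 'a list) \<Rightarrow> nat \<Rightarrow> 'a list" where
  "block_concat U m = concat (map U [0..<m])"

text \<open>The infinite word \<open>U 0 \<cdot> U 1 \<cdot> U 2 \<cdots>\<close>. It is only meaningful when all blocks are nonempty,
  since then position \<open>k\<close> lies within the first \<open>Suc k\<close> blocks.\<close>
definition block_word :: "(nat \<Rightarrow> 'a list) \<Rightarrow> nat \<Rightarrow> 'a" where
  "block_word U k = block_concat U (Suc k) ! k"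

lemma block_concat_Suc: "block_concat U (Suc m) = block_concat U m @ U m"
  by (simp add: block_concat_def)

lemma length_block_concat_ge:
  assumes "\<And>j. U j \<noteq> []"
  shows "m \<le> length (block_concat U m)"
proof (induction m)
  case (Suc m)
  have "Suc m \<le> length (block_concat U m) + length (U m)"
    using Suc.IH assms[of m] by (cases "U m") auto
  then show ?case
    by (simp add: block_concat_Suc)
qed simp

lemma block_concat_nth:
  assumes "m' \<le> m" and "i < length (block_concat U m')"
  shows "block_concat U m ! i = block_concat U m' ! i"
proof -
  have "block_concat U m = block_concat U m' @ concat (map U [m'..<m])"
    using assms(1) upt_add_eq_append[of 0 m' "m - m'"] by (simp add: block_concat_def)
  then show ?thesis
    using assms(2) by (simp add: nth_append)
qed

lemma prefix_block_word_take:
  assumes "\<And>j. U j \<noteq> []" and "k \<le> length (block_concat U m)"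
  shows "prefix_word (block_word U) k = take k (block_concat U m)"
proof (rule nth_equalityI)
  show "length (prefix_word (block_word U) k) = length (take k (block_concat U m))"
    using assms(2) by (simp add: prefix_word_def)
next
  fix i
  assume "i < length (prefix_word (block_word U) k)"
  then have i: "i < k"
    by (simp add: prefix_word_def)
  have "block_concat U (max m (Suc i)) ! i = block_concat U (Suc i) ! i"
    using length_block_concat_ge[of U, OF assms(1), of "Suc i"] by (intro block_concat_nth) auto
  moreover have "block_concat U (max m (Suc i)) ! i = block_concat U m ! i"
    using i assms(2) by (intro block_concat_nth) auto
  ultimately show "prefix_word (block_word U) k ! i = take k (block_concat U m) ! i"
    using i by (simp add: prefix_word_def block_word_def)
qed

lemma prefix_block_word:
  assumes "\<And>j. U j \<noteq> []" and "i \<le> length (U j)"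
  shows "prefix_word (block_word U) (length (block_concat U j) + i) = block_concat U j @ take i (U j)"
  using prefix_block_word_take[of U, OF assms(1), of "length (block_concat U j) + i" "Suc j"] assms(2)
  by (simp add: block_concat_Suc)



section \<open>Leaks violate simplicity\<close>

locale leaking_blocks =
  fixes Delta :: "'q::finite \<Rightarrow> 'a::finite \<Rightarrow> 'q pmf" and U :: "nat \<Rightarrow> 'a list"
    and C :: "'q set" and r q :: 'q and \<mu> :: real
  assumes r_in_C: "r \<in> C" and q_notin_C: "q \<notin> C" and \<mu>_pos: "0 < \<mu>"
    and escape_small: "\<And>j. flow Delta (\<lambda>_. 1) C (U j) (-C) \<le> (1/2) ^ (j + 2)"
    and returns_to_r: "\<And>j c. c \<in> C \<Longrightarrow> \<mu> \<le> word_mat Delta (U j) c r"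
    and reaches_q: "\<And>j. 0 < word_mat Delta (U j) r q"
begin

lemma blocks_nonempty: "U j \<noteq> []"
proof
  assume "U j = []"
  then have "r = q"
    using reaches_q[of j] by (simp add: mat_id_def split: if_splits)
  then show False
    using r_in_C q_notin_C by simp
qed

definition block_dist :: "nat \<Rightarrow> 'q \<Rightarrow> real" where
  "block_dist j = word_mat Delta (block_concat U j) r"

definition inflow :: "nat \<Rightarrow> real" where
  "inflow j = flow Delta (block_dist j) (-C) (U j) C"

lemma block_dist_nonneg: "0 \<le> block_dist j s"
  by (simp add: block_dist_def word_mat_nonneg)

lemma block_dist_le_1: "block_dist j s \<le> 1"
  by (simp add: block_dist_def word_mat_le_1)

lemma inflow_nonneg: "0 \<le> inflow j"
  unfolding inflow_def by (intro flow_nonneg block_dist_nonneg)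

lemma block_dist_Suc: "block_dist (Suc j) t = flow Delta (block_dist j) UNIV (U j) {t}"
  by (simp add: block_dist_def block_concat_Suc word_mat_append mat_mult_def flow_singleton)

lemma block_escape_small: "flow Delta (block_dist j) C (U j) (-C) \<le> (1/2) ^ (j + 2)"
  using flow_le_unit_weight[of "block_dist j", OF block_dist_nonneg block_dist_le_1] escape_small
  by (rule order_trans)

lemma mass_in_C_Suc:
  "(\<Sum>s\<in>C. block_dist (Suc j) s)
     = (\<Sum>s\<in>C. block_dist j s) - flow Delta (block_dist j) C (U j) (-C) + inflow j"
proof -
  have "(\<Sum>s\<in>C. block_dist (Suc j) s) = flow Delta (block_dist j) UNIV (U j) C"
    by (simp add: block_dist_Suc sum_flow_singleton)
  also have "\<dots> = flow Delta (block_dist j) C (U j) C + inflow j"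
    by (simp add: inflow_def flow_source_split)
  finally show ?thesis
    using flow_target_Compl[of Delta "block_dist j" C "U j" C] by simp
qed

lemma mass_in_C_le_1: "(\<Sum>s\<in>C. block_dist j s) \<le> 1"
proof -
  have "(\<Sum>s\<in>C. block_dist j s) \<le> (\<Sum>s\<in>UNIV. block_dist j s)"
    by (intro sum_mono2) (simp_all add: block_dist_nonneg)
  then show ?thesis
    by (simp add: block_dist_def word_mat_row_sum)
qed

lemma mass_in_C_ge_half: "1/2 \<le> (\<Sum>s\<in>C. block_dist j s)"
proof -
  have "1 - (\<Sum>i<j. (1/2::real) ^ (i + 2)) \<le> (\<Sum>s\<in>C. block_dist j s)"
  proof (induction j)
    case 0
    show ?case
      using r_in_C by (simp add: block_dist_def block_concat_def mat_id_def)
  next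
    case (Suc j)
    then show ?case
      using mass_in_C_Suc[of j] block_escape_small[of j] inflow_nonneg[of j] by simp
  qed
  moreover have "(0::real) \<le> (1/2) ^ (j + 1)"
    by simp
  ultimately show ?thesis
    using sum_half_powers[of j] by linarith
qed

lemma inflow_tendsto_0: "inflow \<longlonglongrightarrow> 0"
proof -
  define Z where "Z j = (\<Sum>s\<in>C. block_dist j s) + (\<Sum>i<j. (1/2::real) ^ (i + 2))" for j
  have "inflow j \<le> Z (Suc j) - Z j" for j
    using mass_in_C_Suc[of j] block_escape_small[of j] by (simp add: Z_def)
  moreover have "Z j \<le> 3/2" for j
    using mass_in_C_le_1[of j] sum_half_powers[of j] zero_le_power[of "1/2::real" "j + 1"]
    unfolding Z_def by linarith
  then have "bdd_above (range Z)"
    by (auto intro!: bdd_aboveI[where M = "3/2"])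
  ultimately show ?thesis
    by (intro tendsto_zero_if_bounded_by_increments[of inflow Z] inflow_nonneg)
qed

lemma block_dist_Suc_r: "\<mu> / 2 \<le> block_dist (Suc j) r"
proof -
  have "\<mu> / 2 \<le> (\<Sum>s\<in>C. block_dist j s) * \<mu>"
    using mult_right_mono[OF mass_in_C_ge_half[of j], of \<mu>] \<mu>_pos by simp
  also have "\<dots> \<le> (\<Sum>s\<in>C. block_dist j s * word_mat Delta (U j) s r)"
    unfolding sum_distrib_right
    by (intro sum_mono mult_left_mono returns_to_r block_dist_nonneg)
  also have "\<dots> \<le> flow Delta (block_dist j) UNIV (U j) {r}"
    using flow_source_split[of Delta "block_dist j" "U j" "{r}" C]
    by (simp add: flow_singleton sum_nonneg block_dist_nonneg word_mat_nonneg)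
  finally show ?thesis
    by (simp add: block_dist_Suc)
qed

lemma word_mat_block_prefix:
  assumes "i \<le> length (U j)"
  shows "word_mat Delta (prefix_word (block_word U) (length (block_concat U j) + i)) r t
    = flow Delta (block_dist j) UNIV (take i (U j)) {t}"
  using prefix_block_word[of U, OF blocks_nonempty assms]
  by (simp add: word_mat_append mat_mult_def block_dist_def flow_singleton)

lemma intermediate_mass_in_block:
  assumes pm: "0 < pm" "pm \<le> 1" "\<And>s a t. 0 < pmf (Delta s a) t \<Longrightarrow> pm \<le> pmf (Delta s a) t"
    and \<epsilon>: "0 < \<epsilon>" "\<epsilon> \<le> \<mu> / 2" and escape: "(1/2) ^ (Suc j + 2) \<le> pm * \<epsilon> / 2"
  obtains k t where "j \<le> k"
    and "pm * \<epsilon> \<le> word_mat Delta (prefix_word (block_word U) k) r t"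
    and "word_mat Delta (prefix_word (block_word U) k) r t < \<epsilon> + 2 * inflow (Suc j)"
proof -
  obtain i t where i: "i \<le> length (U (Suc j))"
    and lower: "pm * \<epsilon> \<le> flow Delta (block_dist (Suc j)) UNIV (take i (U (Suc j))) {t}"
    and upper: "flow Delta (block_dist (Suc j)) UNIV (take i (U (Suc j))) {t} < \<epsilon> + 2 * inflow (Suc j)"
    using flow_crossing_with_inflow[where x = "block_dist (Suc j)", OF pm block_dist_nonneg
        block_dist_le_1 r_in_C q_notin_C reaches_q \<epsilon>(1) _ order_trans[OF escape_small escape]]
      \<epsilon>(2) block_dist_Suc_r[of j]
    by (auto simp: inflow_def)
  have "j \<le> length (block_concat U (Suc j)) + i"
    using length_block_concat_ge[of U, OF blocks_nonempty, of "Suc j"] by simp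
  with lower upper show thesis
    by (intro that[of "length (block_concat U (Suc j)) + i" t]) (simp_all only: word_mat_block_prefix[OF i])
qed

lemma not_simple_process: "\<not> simple_process Delta (block_word U) r"
proof
  assume "simple_process Delta (block_word U) r"
  then obtain lam A B where lam: "0 < lam"
    and partition: "\<And>k. A k \<inter> B k = {} \<and> A k \<union> B k = UNIV"
    and A_large: "\<And>k t. t \<in> A k \<Longrightarrow> lam \<le> word_mat Delta (prefix_word (block_word U) k) r t"
    and B_small: "(\<lambda>k. \<Sum>t\<in>B k. word_mat Delta (prefix_word (block_word U) k) r t) \<longlonglongrightarrow> 0"
    unfolding simple_process_def by blast
  obtain pm where pm: "0 < pm" "pm \<le> 1" "\<And>s a t. 0 < pmf (Delta s a) t \<Longrightarrow> pm \<le> pmf (Delta s a) t"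
    using min_pos_transition[of Delta] by blast
  define \<epsilon> where "\<epsilon> = min lam (\<mu> / 2) / 2"
  have \<epsilon>: "0 < \<epsilon>" "\<epsilon> \<le> \<mu> / 2" "2 * \<epsilon> \<le> lam"
    using lam \<mu>_pos by (auto simp: \<epsilon>_def)
  have pm\<epsilon>: "0 < pm * \<epsilon> / 2" "0 < pm * \<epsilon>"
    using pm(1) \<epsilon>(1) by simp_all
  have "(\<lambda>j. (1/2::real) ^ (Suc j + 2)) \<longlonglongrightarrow> 0"
    by (simp add: LIMSEQ_power_zero)
  from order_tendstoD(2)[OF this pm\<epsilon>(1)]
    and order_tendstoD(2)[OF LIMSEQ_Suc[OF inflow_tendsto_0], of "\<epsilon> / 2"]
    and eventually_all_ge_at_top[OF order_tendstoD(2)[OF B_small pm\<epsilon>(2)]]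
  have "\<forall>\<^sub>F j in sequentially. (1/2::real) ^ (Suc j + 2) < pm * \<epsilon> / 2 \<and> inflow (Suc j) < \<epsilon> / 2 \<and>
      (\<forall>k\<ge>j. (\<Sum>t\<in>B k. word_mat Delta (prefix_word (block_word U) k) r t) < pm * \<epsilon>)"
    using \<epsilon>(1) by (simp add: eventually_conj)
  then obtain j where j: "(1/2::real) ^ (Suc j + 2) < pm * \<epsilon> / 2" "inflow (Suc j) < \<epsilon> / 2"
    and B_tail: "\<And>k. j \<le> k \<Longrightarrow> (\<Sum>t\<in>B k. word_mat Delta (prefix_word (block_word U) k) r t) < pm * \<epsilon>"
    using eventually_happens'[OF trivial_limit_sequentially] by blast
  obtain k t where k: "j \<le> k"
    and lower: "pm * \<epsilon> \<le> word_mat Delta (prefix_word (block_word U) k) r t"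
    and upper: "word_mat Delta (prefix_word (block_word U) k) r t < \<epsilon> + 2 * inflow (Suc j)"
    using intermediate_mass_in_block[OF pm \<epsilon>(1,2) less_imp_le[OF j(1)]] by blast
  have "t \<notin> A k"
    using A_large upper j(2) \<epsilon>(3) by fastforce
  then have "t \<in> B k"
    using partition by blast
  then have "word_mat Delta (prefix_word (block_word U) k) r t
      \<le> (\<Sum>t\<in>B k. word_mat Delta (prefix_word (block_word U) k) r t)"
    by (intro member_le_sum) (simp_all add: word_mat_nonneg)
  then show False
    using B_tail[OF k] lower by simp
qed

end

lemma leak_escapes_recurrent_class:
  fixes Delta :: "'q::finite \<Rightarrow> 'a \<Rightarrow> 'q pmf"
  assumes "is_leak Delta u"
  obtains C r q \<mu> where "r \<in> C" and "q \<notin> C" and "0 < \<mu>"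
    and "\<And>n. 0 < word_mat Delta (u n) r q"
    and "(\<lambda>n. flow Delta (\<lambda>_. 1) C (u n) (-C)) \<longlonglongrightarrow> 0"
    and "\<forall>\<^sub>F n in sequentially. \<forall>c\<in>C. \<mu> \<le> word_mat Delta (u n) c r"
proof -
  obtain M r q where conv: "\<And>s t. (\<lambda>n. word_mat Delta (u n) s t) \<longlonglongrightarrow> M s t"
    and idem: "idempotent_mat M" and rec: "recurrent M r"
    and rq_lim: "(\<lambda>n. word_mat Delta (u n) r q) \<longlonglongrightarrow> 0"
    and rq_pos: "\<And>n. 0 < word_mat Delta (u n) r q"
    using assms unfolding is_leak_def by blast
  have stoch: "stochastic_mat M"
    by (rule stochastic_mat_limit[OF stochastic_word_mat conv])
  then have nonneg: "\<And>s t. 0 \<le> M s t"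
    by (simp add: stochastic_mat_def)
  define C where "C = {c. 0 < M r c}"
  have r_in_C: "r \<in> C"
    using recurrent_idempotent_diag[OF stoch idem rec] by (simp add: C_def)
  have "M r q = 0"
    using LIMSEQ_unique[OF conv rq_lim] .
  then have q_notin_C: "q \<notin> C"
    by (simp add: C_def)
  have closed: "M c d = 0" if "c \<in> C" and "d \<notin> C" for c d
  proof -
    have "\<not> 0 < M c d"
      using that idempotent_mat_trans[OF idem nonneg, of r c d] by (auto simp: C_def)
    then show ?thesis
      using nonneg[of c d] by simp
  qed
  have "(\<lambda>n. flow Delta (\<lambda>_. 1) C (u n) (-C)) \<longlonglongrightarrow> (\<Sum>c\<in>C. \<Sum>d\<in>-C. M c d)"
    unfolding flow_def by (simp add: tendsto_sum conv)
  also have "(\<Sum>c\<in>C. \<Sum>d\<in>-C. M c d) = 0"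
    by (simp add: closed)
  finally have escape: "(\<lambda>n. flow Delta (\<lambda>_. 1) C (u n) (-C)) \<longlonglongrightarrow> 0" .
  define \<mu> where "\<mu> = Min ((\<lambda>c. M c r) ` C) / 2"
  have return: "0 < M c r" if "c \<in> C" for c
    using that recurrent_idempotent_return[OF stoch idem rec] recurrent_idempotent_diag[OF stoch idem rec]
    by (auto simp: C_def)
  then have "0 < Min ((\<lambda>c. M c r) ` C)"
    using r_in_C by (subst Min_gr_iff) auto
  then have "0 < \<mu>"
    by (simp add: \<mu>_def)
  have "\<forall>\<^sub>F n in sequentially. \<mu> \<le> word_mat Delta (u n) c r" if "c \<in> C" for c
  proof -
    have "Min ((\<lambda>c. M c r) ` C) \<le> M c r"
      using that by simp
    then have "\<mu> < M c r"
      using return[OF that] by (simp add: \<mu>_def)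
    then show ?thesis
      by (rule eventually_mono[OF order_tendstoD(1)[OF conv]]) simp
  qed
  then have "\<forall>\<^sub>F n in sequentially. \<forall>c\<in>C. \<mu> \<le> word_mat Delta (u n) c r"
    by (simp add: eventually_ball_finite_distrib)
  with r_in_C q_notin_C \<open>0 < \<mu>\<close> rq_pos escape show thesis
    by (rule that)
qed

lemma leak_yields_leaking_blocks:
  fixes Delta :: "'q::finite \<Rightarrow> 'a::finite \<Rightarrow> 'q pmf"
  assumes "is_leak Delta u"
  obtains U C r q \<mu> where "leaking_blocks Delta U C r q \<mu>"
proof -
  obtain C r q \<mu> where C: "r \<in> C" "q \<notin> C" and "0 < \<mu>"
    and reaches: "\<And>n. 0 < word_mat Delta (u n) r q"
    and escape: "(\<lambda>n. flow Delta (\<lambda>_. 1) C (u n) (-C)) \<longlonglongrightarrow> 0"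
    and return: "\<forall>\<^sub>F n in sequentially. \<forall>c\<in>C. \<mu> \<le> word_mat Delta (u n) c r"
    by (rule leak_escapes_recurrent_class[OF assms]) blast
  have "\<exists>n. flow Delta (\<lambda>_. 1) C (u n) (-C) \<le> (1/2) ^ (j + 2) \<and> (\<forall>c\<in>C. \<mu> \<le> word_mat Delta (u n) c r)"
    for j
  proof -
    have "\<forall>\<^sub>F n in sequentially. flow Delta (\<lambda>_. 1) C (u n) (-C) < (1/2) ^ (j + 2)"
      by (rule order_tendstoD(2)[OF escape]) simp
    then have "\<forall>\<^sub>F n in sequentially. flow Delta (\<lambda>_. 1) C (u n) (-C) \<le> (1/2) ^ (j + 2) \<and>
        (\<forall>c\<in>C. \<mu> \<le> word_mat Delta (u n) c r)"
      using return by eventually_elim simp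
    then show ?thesis
      using eventually_happens'[OF trivial_limit_sequentially] by blast
  qed
  then obtain n where "\<And>j. flow Delta (\<lambda>_. 1) C (u (n j)) (-C) \<le> (1/2) ^ (j + 2)"
    and "\<And>j c. c \<in> C \<Longrightarrow> \<mu> \<le> word_mat Delta (u (n j)) c r"
    by metis
  then have "leaking_blocks Delta (u \<circ> n) C r q \<mu>"
    using C \<open>0 < \<mu>\<close> reaches by unfold_locales simp_all
  then show thesis
    by (rule that)
qed

theorem theorem5p9:
  fixes Delta :: "'q::finite \<Rightarrow> 'a::finite \<Rightarrow> 'q pmf"
  assumes "simple_pa Delta"
  shows "leaktight Delta"
  unfolding leaktight_def
proof
  assume "\<exists>u. is_leak Delta u"
  then obtain U C r q \<mu> where "leaking_blocks Delta U C r q \<mu>"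
    using leak_yields_leaking_blocks by metis
  then have "\<not> simple_process Delta (block_word U) r"
    by (rule leaking_blocks.not_simple_process)
  with assms show False
    unfolding simple_pa_def by blast
qed

end
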